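(* Let $\mathcal{U}\subset\mathbb{R}^d$ be a nonempty box $\{u:u_{\min}\le u\le u_{\max}\}$, let $L:\mathbb{R}^d\to\mathbb{R}$ be measurable, $u^*\in\mathcal{U}$, and let $\lambda^{\min},\lambda^{\max}>0$, $\eta\ge0$ be constants such that for all $u\in\mathcal{U}$ $$\lambda^{\min}|u-u^*|^2\le L(u)-L(u^* )\le\eta|u-u^*|+\lambda^{\max}|u-u^*|^2 .$$ Let $f$ be a probability measure on $\mathbb{R}^d$ supported in $\mathcal{U}$ with $u^*\in\operatorname{supp}(f)$, and fix $\alpha>0$. Then for every $\varepsilon>0$ and every $R_\varepsilon>0$ with $$R_\varepsilon\le\min\Big\{\varepsilon^2\frac{\lambda^{\min}}{8(\lambda^{\max}+\eta)},\,1\Big\},$$ it holds $$\big|m^\alpha_L[f]-u^*\big|\le\frac{\varepsilon}{2}+\frac{\exp\!\big(-\alpha\lambda^{\min}(\varepsilon/4)^2\big)}{f(B_{R_\varepsilon}(u^* ))}\,\mathrm{V}^*[f].$$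
   Context: For a probability measure $f$ on $\mathbb{R}^d$, $m^\alpha_L[f]:=\dfrac{\int u\,e^{-\alpha L(u)}f(du)}{\int e^{-\alpha L(u)}f(du)}$ and $\mathrm{V}^*[f]:=\int|u-u^*|\,f(du)$. $B_R(v)$ is the closed Euclidean ball of radius $R$ centered at $v$. In the paper, $L=L_n$ is the MPC loss, $u^*=u^*_{(n)}$, $\lambda^{\min},\lambda^{\max}$ are the extreme eigenvalues of $F_c^\top F_c+\nu I_d$ and $\eta=|\eta^{1,*}_{(n)}|+|\eta^{2,*}_{(n)}|$ is the sum of norms of the Lagrange multipliers. *)

theory Defs
  imports "HOL-Probability.Probability"
begin

definition consensus_point ::
  "'a::euclidean_space measure \<Rightarrow> real \<Rightarrow> ('a \<Rightarrow> real) \<Rightarrow> 'a" where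
  "consensus_point f \<alpha> L =
     (1 / (\<integral>u. exp (- \<alpha> * L u) \<partial>f)) *\<^sub>R (\<integral>u. exp (- \<alpha> * L u) *\<^sub>R u \<partial>f)"

definition Vstar :: "'a::euclidean_space measure \<Rightarrow> 'a \<Rightarrow> real" where
  "Vstar f ustar = (\<integral>u. norm (u - ustar) \<partial>f)"

definition msupp :: "'a::euclidean_space measure \<Rightarrow> 'a set" where
  "msupp f = {x. \<forall>r>0. emeasure f (ball x r) > 0}"

end

theory Submission
  imports Defs
begin

(* Normalise L so that L ustar = 0, which does not change the consensus point.  The weights
   w = exp (-\<alpha> L) then satisfy w \<le> exp (-\<alpha> lmin |u - ustar|\<^sup>2) on the box, hence
   w \<le> exp (-\<alpha> lmin (\<epsilon>/2)\<^sup>2) outside the ball of radius \<epsilon>/2, while the upper bound on L gives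
   w \<ge> exp (-\<alpha> lmin \<epsilon>\<^sup>2/8) on the ball of radius R.  Writing the consensus point minus ustar
   as the w-weighted mean of u - ustar and splitting the integral of w |u - ustar| at radius \<epsilon>/2
   bounds the distance by \<epsilon>/2 + exp (-\<alpha> lmin \<epsilon>\<^sup>2/4) V*[f] / \<integral>w, and Markov's inequality
   gives \<integral>w \<ge> exp (-\<alpha> lmin \<epsilon>\<^sup>2/8) f(B_R(ustar)). *)

lemma consensus_point_add_const:
  "consensus_point f \<alpha> (\<lambda>u. L u + c) = consensus_point f \<alpha> L"
proof -
  define k where "k = exp (- \<alpha> * c)"
  have weight: "exp (- \<alpha> * (L u + c)) = k * exp (- \<alpha> * L u)" for u
    by (simp add: k_def algebra_simps flip: exp_add)
  have "(\<integral>u. exp (- \<alpha> * (L u + c)) *\<^sub>R u \<partial>f) = k *\<^sub>R (\<integral>u. exp (- \<alpha> * L u) *\<^sub>R u \<partial>f)"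
    unfolding weight by (simp only: scaleR_scaleR[symmetric] integral_scaleR_right)
  then show ?thesis
    unfolding consensus_point_def weight by (simp add: k_def)
qed

lemma norm_weighted_mean_minus_le:
  fixes w :: "'a::{banach, second_countable_topology} \<Rightarrow> real"
  assumes "integrable M w" "integrable M (\<lambda>u. w u *\<^sub>R u)"
    and "\<And>u. 0 \<le> w u" "(\<integral>u. w u \<partial>M) > 0"
  shows "norm ((1 / (\<integral>u. w u \<partial>M)) *\<^sub>R (\<integral>u. w u *\<^sub>R u \<partial>M) - x)
           \<le> (\<integral>u. w u * norm (u - x) \<partial>M) / (\<integral>u. w u \<partial>M)"
proof -
  define Z where "Z = (\<integral>u. w u \<partial>M)"
  have "(\<integral>u. w u *\<^sub>R (u - x) \<partial>M) = (\<integral>u. w u *\<^sub>R u \<partial>M) - Z *\<^sub>R x"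
    using assms(1,2) by (simp add: scaleR_diff_right Z_def)
  then have "(1 / Z) *\<^sub>R (\<integral>u. w u *\<^sub>R u \<partial>M) - x = (1 / Z) *\<^sub>R (\<integral>u. w u *\<^sub>R (u - x) \<partial>M)"
    using assms(4) by (simp add: Z_def scaleR_diff_right)
  also have "norm \<dots> = norm (\<integral>u. w u *\<^sub>R (u - x) \<partial>M) / Z"
    using assms(4) by (simp add: Z_def)
  also have "\<dots> \<le> (\<integral>u. norm (w u *\<^sub>R (u - x)) \<partial>M) / Z"
    using assms(4) by (intro divide_right_mono integral_norm_bound) (simp add: Z_def)
  also have "(\<integral>u. norm (w u *\<^sub>R (u - x)) \<partial>M) = (\<integral>u. w u * norm (u - x) \<partial>M)"
    using assms(3) by simp
  finally show ?thesis unfolding Z_def .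
qed

lemma integral_mult_le_split:
  fixes w d :: "'a \<Rightarrow> real"
  assumes "integrable M w" "integrable M d" "\<And>u. 0 \<le> w u" "\<And>u. 0 \<le> d u"
    and tail: "AE u in M. r \<le> d u \<longrightarrow> w u \<le> \<delta>" and "0 \<le> r" "0 \<le> \<delta>"
  shows "(\<integral>u. w u * d u \<partial>M) \<le> r * (\<integral>u. w u \<partial>M) + \<delta> * (\<integral>u. d u \<partial>M)"
proof -
  have "(\<integral>u. w u * d u \<partial>M) \<le> (\<integral>u. r * w u + \<delta> * d u \<partial>M)"
  proof (rule integral_mono_AE')
    show "AE u in M. w u * d u \<le> r * w u + \<delta> * d u"
      using tail
    proof eventually_elim
      case (elim u)
      show ?case
      proof (cases "r \<le> d u")
        case True
        then have "w u * d u \<le> \<delta> * d u"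
          using elim assms(4)[of u] by (simp add: mult_right_mono)
        moreover have "0 \<le> r * w u"
          using assms(3)[of u] \<open>0 \<le> r\<close> by simp
        ultimately show ?thesis by linarith
      next
        case False
        then have "w u * d u \<le> r * w u"
          using assms(3)[of u] by (simp add: mult.commute mult_right_mono)
        moreover have "0 \<le> \<delta> * d u"
          using assms(4)[of u] \<open>0 \<le> \<delta>\<close> by simp
        ultimately show ?thesis by linarith
      qed
    qed
  qed (use assms in auto)
  also have "\<dots> = r * (\<integral>u. w u \<partial>M) + \<delta> * (\<integral>u. d u \<partial>M)"
    using assms(1,2) by simp
  finally show ?thesis .
qed

lemma (in finite_measure) measure_mult_le_integral:
  fixes w :: "'a \<Rightarrow> real"
  assumes "integrable M w" "AE u in M. 0 \<le> w u" "S \<in> sets M"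
    and "AE u in M. u \<in> S \<longrightarrow> m \<le> w u" "0 < m"
  shows "m * measure M S \<le> (\<integral>u. w u \<partial>M)"
proof -
  have [measurable]: "w \<in> borel_measurable M"
    using assms(1) by blast
  have "measure M S \<le> measure M {u \<in> space M. m \<le> w u}"
    using assms(4) by (intro finite_measure_mono_AE) (auto elim: AE_mp)
  also have "\<dots> \<le> (\<integral>u. w u \<partial>M) / m"
    using assms by (intro integral_Markov_inequality_measure) auto
  finally show ?thesis
    using \<open>0 < m\<close> by (simp add: field_simps)
qed

lemma weighted_mean_concentration:
  fixes w :: "'a::{banach, second_countable_topology} \<Rightarrow> real"
  assumes "finite_measure M"
    and "integrable M w" "integrable M (\<lambda>u. w u *\<^sub>R u)" "integrable M (\<lambda>u. norm (u - x))"
    and "\<And>u. 0 \<le> w u"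
    and tail: "AE u in M. r \<le> norm (u - x) \<longrightarrow> w u \<le> \<delta>" "0 \<le> r" "0 \<le> \<delta>"
    and near: "S \<in> sets M" "AE u in M. u \<in> S \<longrightarrow> m \<le> w u" "0 < m" "0 < measure M S"
  shows "norm ((1 / (\<integral>u. w u \<partial>M)) *\<^sub>R (\<integral>u. w u *\<^sub>R u \<partial>M) - x)
           \<le> r + \<delta> / m / measure M S * (\<integral>u. norm (u - x) \<partial>M)"
proof -
  define Z where "Z = (\<integral>u. w u \<partial>M)"
  define V where "V = (\<integral>u. norm (u - x) \<partial>M)"
  have Z_ge: "m * measure M S \<le> Z"
    unfolding Z_def using assms by (intro finite_measure.measure_mult_le_integral) auto
  have "0 < m * measure M S"
    using near by simp
  with Z_ge have "0 < Z" by linarith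
  have "V \<ge> 0"
    by (simp add: V_def)
  have "norm ((1 / Z) *\<^sub>R (\<integral>u. w u *\<^sub>R u \<partial>M) - x) \<le> (\<integral>u. w u * norm (u - x) \<partial>M) / Z"
    unfolding Z_def using assms \<open>0 < Z\<close> by (intro norm_weighted_mean_minus_le) (auto simp: Z_def)
  also have "\<dots> \<le> (r * Z + \<delta> * V) / Z"
    unfolding Z_def V_def using assms \<open>0 < Z\<close>
    by (intro divide_right_mono integral_mult_le_split) (auto simp: Z_def)
  also have "\<dots> = r + \<delta> * V / Z"
    using \<open>0 < Z\<close> by (simp add: field_simps)
  also have "\<dots> \<le> r + \<delta> * V / (m * measure M S)"
    using Z_ge \<open>0 < m * measure M S\<close> \<open>0 \<le> \<delta>\<close> \<open>V \<ge> 0\<close>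
    by (intro add_left_mono divide_left_mono) auto
  finally show ?thesis
    by (simp add: Z_def V_def)
qed

lemma (in finite_measure) integrable_bounded_on_AE:
  fixes h :: "'a \<Rightarrow> 'b::{banach, second_countable_topology}"
  assumes "AE u in M. u \<in> K" "\<And>u. u \<in> K \<Longrightarrow> norm (h u) \<le> B" "h \<in> borel_measurable M"
  shows "integrable M h"
proof (rule integrable_const_bound)
  show "AE u in M. norm (h u) \<le> B"
    using assms(1) by eventually_elim (rule assms(2))
qed (rule assms(3))

lemma integrable_weights_bounded_support:
  fixes w :: "'a::euclidean_space \<Rightarrow> real"
  assumes "finite_measure M" "sets M = sets borel" "AE u in M. u \<in> K" "bounded K"
    and "w \<in> borel_measurable borel" "\<And>u. u \<in> K \<Longrightarrow> \<bar>w u\<bar> \<le> 1"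
  shows "integrable M w" "integrable M (\<lambda>u. w u *\<^sub>R u)" "integrable M (\<lambda>u. norm (u - x))"
proof -
  obtain B where B: "\<And>u. u \<in> K \<Longrightarrow> norm u \<le> B"
    using \<open>bounded K\<close> unfolding bounded_iff by blast
  have meas: "w \<in> borel_measurable M" "(\<lambda>u. w u *\<^sub>R u) \<in> borel_measurable M"
    "(\<lambda>u. norm (u - x)) \<in> borel_measurable M"
    unfolding measurable_cong_sets[OF assms(2) refl] using assms(5) by measurable
  show "integrable M w"
    by (rule finite_measure.integrable_bounded_on_AE[OF assms(1) assms(3) _ meas(1), of 1])
      (simp add: assms(6))
  show "integrable M (\<lambda>u. w u *\<^sub>R u)"
    by (rule finite_measure.integrable_bounded_on_AE[OF assms(1) assms(3) _ meas(2), of B])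
      (simp, meson B assms(6) abs_ge_zero norm_ge_zero mult_left_le_one_le order_trans)
  show "integrable M (\<lambda>u. norm (u - x))"
    by (rule finite_measure.integrable_bounded_on_AE[OF assms(1) assms(3) _ meas(3), of "B + norm x"])
      (simp, meson B add_right_mono norm_triangle_ineq4 order_trans)
qed

lemma measure_cball_pos:
  fixes x :: "'a::euclidean_space"
  assumes "finite_measure M" "sets M = sets borel" "x \<in> msupp M" "0 < R"
  shows "0 < measure M (cball x R)"
proof -
  have "0 < emeasure M (ball x R)"
    using assms(3,4) by (simp add: msupp_def)
  also have "\<dots> \<le> emeasure M (cball x R)"
    using assms(2) by (intro emeasure_mono) auto
  finally show ?thesis
    using assms(1) by (simp add: finite_measure.emeasure_eq_measure)
qed

lemma exp_neg_le_of_quadratic_growth: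
  fixes \<alpha> c r t y :: real
  assumes "0 \<le> \<alpha>" "0 \<le> c" "0 \<le> r" "r \<le> t" "c * t\<^sup>2 \<le> y"
  shows "exp (- \<alpha> * y) \<le> exp (- \<alpha> * c * r\<^sup>2)"
proof -
  have "c * r\<^sup>2 \<le> y"
    using assms(2-5) by (meson mult_left_mono power_mono order_trans)
  then show ?thesis
    using assms(1) by (simp add: mult_left_mono mult.assoc)
qed

lemma quadratic_growth_weight_bounds:
  fixes \<alpha> lmin lmax \<eta> \<epsilon> R d y :: real
  assumes "0 < \<alpha>" "0 < lmin" "0 < lmax" "0 \<le> \<eta>" "0 < \<epsilon>"
    and R_le: "R \<le> min (\<epsilon>\<^sup>2 * lmin / (8 * (lmax + \<eta>))) 1"
    and "0 \<le> d" "lmin * d\<^sup>2 \<le> y" "y \<le> \<eta> * d + lmax * d\<^sup>2"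
  shows "exp (- \<alpha> * y) \<le> 1"
    and "\<epsilon> / 2 \<le> d \<Longrightarrow> exp (- \<alpha> * y) \<le> exp (- \<alpha> * lmin * (\<epsilon> / 2)\<^sup>2)"
    and "d \<le> R \<Longrightarrow> exp (- \<alpha> * (\<epsilon>\<^sup>2 * lmin / 8)) \<le> exp (- \<alpha> * y)"
proof -
  show "exp (- \<alpha> * y) \<le> 1"
    using exp_neg_le_of_quadratic_growth[of \<alpha> lmin 0 d y] assms by simp
  show "exp (- \<alpha> * y) \<le> exp (- \<alpha> * lmin * (\<epsilon> / 2)\<^sup>2)" if "\<epsilon> / 2 \<le> d"
    using exp_neg_le_of_quadratic_growth[of \<alpha> lmin "\<epsilon> / 2" d y] assms that by simp
  assume "d \<le> R"
  then have "d\<^sup>2 \<le> R"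
    using \<open>0 \<le> d\<close> R_le by (simp add: power2_eq_square order_trans[OF mult_right_le_one_le])
  then have "\<eta> * d + lmax * d\<^sup>2 \<le> \<eta> * R + lmax * R"
    using \<open>d \<le> R\<close> assms(3,4) by (intro add_mono mult_left_mono) auto
  then have "y \<le> (\<eta> + lmax) * R"
    using assms(9) by (simp add: distrib_right)
  also have "\<dots> \<le> \<epsilon>\<^sup>2 * lmin / 8"
    using R_le assms(3,4) by (simp add: field_simps)
  finally show "exp (- \<alpha> * (\<epsilon>\<^sup>2 * lmin / 8)) \<le> exp (- \<alpha> * y)"
    using assms(1) by simp
qed

theorem mainTheorem2:
  fixes umin umax ustar :: "'a::euclidean_space"
    and L :: "'a \<Rightarrow> real"
    and f :: "'a measure"
    and lmin lmax \<eta> \<alpha> \<epsilon> R :: real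
  assumes box_ne: "cbox umin umax \<noteq> {}"
    and L_meas: "L \<in> borel_measurable borel"
    and ustar_in: "ustar \<in> cbox umin umax"
    and lmin_pos: "lmin > 0" and lmax_pos: "lmax > 0" and eta_nonneg: "\<eta> \<ge> 0"
    and L_bounds: "\<And>u. u \<in> cbox umin umax \<Longrightarrow>
        lmin * (norm (u - ustar))\<^sup>2 \<le> L u - L ustar \<and>
        L u - L ustar \<le> \<eta> * norm (u - ustar) + lmax * (norm (u - ustar))\<^sup>2"
    and f_prob: "prob_space f"
    and f_sets: "sets f = sets borel"
    and f_supp: "emeasure f (UNIV - cbox umin umax) = 0"
    and ustar_supp: "ustar \<in> msupp f"
    and alpha_pos: "\<alpha> > 0"
    and eps_pos: "\<epsilon> > 0"
    and R_pos: "R > 0"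
    and R_le: "R \<le> min (\<epsilon>\<^sup>2 * lmin / (8 * (lmax + \<eta>))) 1"
  shows "norm (consensus_point f \<alpha> L - ustar)
           \<le> \<epsilon> / 2 + exp (- \<alpha> * lmin * (\<epsilon> / 4)\<^sup>2) / measure f (cball ustar R) * Vstar f ustar"
proof -
  interpret prob_space f by (rule f_prob)
  let ?U = "cbox umin umax" and ?d = "\<lambda>u. norm (u - ustar)"
  define w where "w u = exp (- \<alpha> * (L u - L ustar))" for u
  have box_AE: "AE u in f. u \<in> ?U"
    by (rule AE_I[of _ _ "UNIV - ?U"]) (auto simp: f_supp f_sets sets_eq_imp_space_eq[OF f_sets])
  have w_meas: "w \<in> borel_measurable borel"
    unfolding w_def using L_meas by measurable
  have w_bounds: "\<bar>w u\<bar> \<le> 1"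
      "\<epsilon> / 2 \<le> ?d u \<Longrightarrow> w u \<le> exp (- \<alpha> * lmin * (\<epsilon> / 2)\<^sup>2)"
      "?d u \<le> R \<Longrightarrow> exp (- \<alpha> * (\<epsilon>\<^sup>2 * lmin / 8)) \<le> w u" if "u \<in> ?U" for u
    using quadratic_growth_weight_bounds[OF alpha_pos lmin_pos lmax_pos eta_nonneg eps_pos R_le
        norm_ge_zero L_bounds[OF that, THEN conjunct1] L_bounds[OF that, THEN conjunct2]]
    unfolding w_def by simp_all
  note integrable = integrable_weights_bounded_support[OF finite_measure_axioms f_sets box_AE
      bounded_cbox w_meas w_bounds(1)]
  have tail: "AE u in f. \<epsilon> / 2 \<le> ?d u \<longrightarrow> w u \<le> exp (- \<alpha> * lmin * (\<epsilon> / 2)\<^sup>2)"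
    using box_AE by eventually_elim (blast intro: w_bounds(2))
  have near: "AE u in f. u \<in> cball ustar R \<longrightarrow> exp (- \<alpha> * (\<epsilon>\<^sup>2 * lmin / 8)) \<le> w u"
    using box_AE
    by eventually_elim (intro impI w_bounds(3), auto simp: dist_norm norm_minus_commute)
  have cp: "consensus_point f \<alpha> L = (1 / (\<integral>u. w u \<partial>f)) *\<^sub>R (\<integral>u. w u *\<^sub>R u \<partial>f)"
    using consensus_point_add_const[of f \<alpha> L "- L ustar"] by (simp add: consensus_point_def w_def)
  note ball_pos = measure_cball_pos[OF finite_measure_axioms f_sets ustar_supp R_pos]
  have "norm (consensus_point f \<alpha> L - ustar) \<le> \<epsilon> / 2 + exp (- \<alpha> * lmin * (\<epsilon> / 2)\<^sup>2)
      / exp (- \<alpha> * (\<epsilon>\<^sup>2 * lmin / 8)) / measure f (cball ustar R) * Vstar f ustar"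
    unfolding cp Vstar_def
    by (rule weighted_mean_concentration[OF finite_measure_axioms integrable _ tail _ _ _ near])
      (use eps_pos f_sets ball_pos in \<open>auto simp: w_def\<close>)
  also have "exp (- \<alpha> * lmin * (\<epsilon> / 2)\<^sup>2) / exp (- \<alpha> * (\<epsilon>\<^sup>2 * lmin / 8))
      = exp (- \<alpha> * lmin * (\<epsilon>\<^sup>2 / 8))"
    by (simp add: power_divide algebra_simps flip: exp_diff)
  also have "\<dots> \<le> exp (- \<alpha> * lmin * (\<epsilon> / 4)\<^sup>2)"
    using alpha_pos lmin_pos by (simp add: power_divide)
  finally show ?thesis
    using ball_pos by (simp add: Vstar_def divide_right_mono mult_right_mono)
qed

end
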